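(* Let $\mathcal{H}$ be a reproducing kernel Hilbert space of real-valued functions on $\mathbb{R}^p$ with positive definite reproducing kernel $K$ and norm $\|\cdot\|_{\mathcal{H}}$. Let training data $\{(y_i,\mathbf{x}_i)\}_{i=1}^N\subset\mathbb{R}\times\mathbb{R}^p$ be given, set $\mathbf{y}:=[y_1,\dots,y_N]'$, and let $\mathbf{K}\in\mathbb{R}^{N\times N}$ with $[\mathbf{K}]_{ij}=K(\mathbf{x}_i,\mathbf{x}_j)$ be positive definite. Let $\mu\ge0$, $\lambda_1\ge0$, and define $$\mathbf{X}_\mu:=\begin{bmatrix}\mathbf{I}_N-\mathbf{K}(\mathbf{K}+\mu\mathbf{I}_N)^{-1}\\ (\mu\mathbf{K})^{1/2}(\mathbf{K}+\mu\mathbf{I}_N)^{-1}\end{bmatrix}\in\mathbb{R}^{2N\times N}.$$ Let $$\hat{\mathbf{o}}_{\mathrm{Lasso}}\in\arg\min_{\mathbf{o}\in\mathbb{R}^N}\ \|\mathbf{X}_\mu\mathbf{y}-\mathbf{X}_\mu\mathbf{o}\|_2^2+\lambda_1\|\mathbf{o}\|_1 .$$ Then the minimizers $(\hat f,\hat{\mathbf{o}})$ of $$\min_{f\in\mathcal{H},\ \mathbf{o}\in\mathbb{R}^N}\Big[\sum_{i=1}^N (y_i-f(\mathbf{x}_i)-o_i)^2+\mu\|f\|_{\mathcal{H}}^2+\lambda_1\|\mathbf{o}\|_1\Big]$$ are determined by $\hat{\mathbf{o}}_{\mathrm{Lasso}}$ as $\hat{\mathbf{o}}=\hat{\mathbf{o}}_{\mathrm{Lasso}}$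 and $\hat f(\mathbf{x})=\sum_{i=1}^N\hat\beta_iK(\mathbf{x},\mathbf{x}_i)$ with $\hat{\boldsymbol\beta}=(\mathbf{K}+\mu\mathbf{I}_N)^{-1}(\mathbf{y}-\hat{\mathbf{o}}_{\mathrm{Lasso}})$; i.e., this pair is a minimizer of the latter problem.
   Context: $(\mu\mathbf{K})^{1/2}$ denotes the symmetric positive semidefinite square root; $\mathbf{I}_N$ is the $N\times N$ identity. *)

theory Defs
  imports "HOL-Analysis.Analysis"
begin

definition psd_mat :: "real^'n^'n \<Rightarrow> bool" where
  "psd_mat S \<longleftrightarrow> (\<forall>v. 0 \<le> v \<bullet> (S *v v))"

definition pd_mat :: "real^'n^'n \<Rightarrow> bool" where
  "pd_mat S \<longleftrightarrow> (\<forall>v. v \<noteq> 0 \<longrightarrow> 0 < v \<bullet> (S *v v))"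

definition psd_sqrt :: "real^'n^'n \<Rightarrow> real^'n^'n" where
  "psd_sqrt M = (THE S. transpose S = S \<and> psd_mat S \<and> S ** S = M)"

definition pd_kernel :: "('a \<Rightarrow> 'a \<Rightarrow> real) \<Rightarrow> bool" where
  "pd_kernel K \<longleftrightarrow> (\<forall>a b. K a b = K b a) \<and>
     (\<forall>S c. finite S \<longrightarrow> 0 \<le> (\<Sum>a\<in>S. \<Sum>b\<in>S. c a * c b * K a b))"

text \<open>An RKHS on domain 'a, modelled as a Hilbert space 'h whose elements are identified
  with the functions \<open>rkhs_eval f = (\<lambda>z. f \<bullet> k z)\<close> (injectively); \<open>k z\<close> is the kernel section
  \<open>K(\<cdot>,z)\<close>, and K is the reproducing kernel.\<close>
definition rkhs_eval :: "('a \<Rightarrow> 'h::real_inner) \<Rightarrow> 'h \<Rightarrow> 'a \<Rightarrow> real" where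
  "rkhs_eval k f z = f \<bullet> k z"

definition is_rkhs :: "('a \<Rightarrow> 'h::{real_inner,complete_space}) \<Rightarrow> ('a \<Rightarrow> 'a \<Rightarrow> real) \<Rightarrow> bool" where
  "is_rkhs k K \<longleftrightarrow> inj (rkhs_eval k) \<and> (\<forall>z w. rkhs_eval k (k w) z = K z w)"

definition l1norm :: "real^'n \<Rightarrow> real" where
  "l1norm v = (\<Sum>i\<in>UNIV. \<bar>v $ i\<bar>)"

definition kmat :: "('a \<Rightarrow> 'a \<Rightarrow> real) \<Rightarrow> ('n::finite \<Rightarrow> 'a) \<Rightarrow> real^'n^'n" where
  "kmat K x = (\<chi> i j. K (x i) (x j))"

text \<open>The stacked 2N x N matrix X_mu; rows indexed by 'n + 'n (top block Inl, bottom block Inr).\<close>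
definition X_mu :: "real \<Rightarrow> real^'n^'n \<Rightarrow> real^'n^('n + 'n)" where
  "X_mu \<mu> Km = (let R = matrix_inv (Km + \<mu> *\<^sub>R mat 1);
                   A = mat 1 - Km ** R;
                   B = psd_sqrt (\<mu> *\<^sub>R Km) ** R
               in (\<chi> r. case r of Inl j \<Rightarrow> A $ j | Inr j \<Rightarrow> B $ j))"

definition lasso_obj :: "real \<Rightarrow> real \<Rightarrow> real^'n^'n \<Rightarrow> real^'n \<Rightarrow> real^'n \<Rightarrow> real" where
  "lasso_obj \<mu> lam1 Km y ov = (norm (X_mu \<mu> Km *v y - X_mu \<mu> Km *v ov))\<^sup>2 + lam1 * l1norm ov"

definition robust_obj :: "('a \<Rightarrow> 'h::real_inner) \<Rightarrow> ('n::finite \<Rightarrow> 'a) \<Rightarrow> real^'n \<Rightarrow> real \<Rightarrow> real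
      \<Rightarrow> 'h \<Rightarrow> real^'n \<Rightarrow> real" where
  "robust_obj k x y \<mu> lam1 f ov =
     (\<Sum>i\<in>UNIV. (y $ i - rkhs_eval k f (x i) - ov $ i)\<^sup>2) + \<mu> * (norm f)\<^sup>2 + lam1 * l1norm ov"

end

theory Submission
  imports Defs
begin

text \<open>For a fixed outlier vector \<open>o\<close>, minimising over \<open>f\<close> is kernel ridge regression on
  \<open>y - o\<close>. Writing \<open>f = g + h\<close> with \<open>g = \<Sum>\<^sub>j \<beta>\<^sub>j K(\<cdot>, x\<^sub>j)\<close> and
  \<open>\<beta> = (K + \<mu> I)\<^sup>-\<^sup>1 (y - o)\<close>, the normal equation \<open>y - o - K \<beta> = \<mu> \<beta>\<close> cancels all cross terms, so
  the robust objective equals \<open>\<parallel>y - o - K \<beta>\<parallel>\<^sup>2 + \<mu> \<beta>\<^sup>T K \<beta> + \<lambda>\<^sub>1 \<parallel>o\<parallel>\<^sub>1\<close> plus a nonnegative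
  term in \<open>h\<close>. The first three terms are exactly the lasso objective, since the two blocks of
  \<open>X\<^sub>\<mu> (y - o)\<close> are \<open>y - o - K \<beta>\<close> and \<open>(\<mu> K)\<^sup>1\<^sup>/\<^sup>2 \<beta>\<close>. Hence the lasso minimiser together
  with \<open>h = 0\<close> minimises the robust objective. Since \<open>psd_sqrt\<close> is a definite description, this
  also needs existence and uniqueness of symmetric positive semidefinite square roots; both come
  from eigenvectors obtained by maximising the Rayleigh quotient on invariant subspaces.\<close>

section \<open>Quadratic forms and eigenvectors of symmetric matrices\<close>

lemma symmetric_inner_matrix_commute:
  fixes M :: "real^'n^'n"
  assumes "transpose M = M"
  shows "x \<bullet> (M *v y) = y \<bullet> (M *v x)"
proof -
  have "x \<bullet> (M *v y) = (transpose M *v x) \<bullet> y" by (simp add: dot_lmul_matrix)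
  then show ?thesis using assms by (simp add: inner_commute)
qed

lemma symmetric_quadratic_form_add_scaleR:
  fixes M :: "real^'n^'n"
  assumes "transpose M = M"
  shows "(a + t *\<^sub>R b) \<bullet> (M *v (a + t *\<^sub>R b))
           = a \<bullet> (M *v a) + 2 * t * (b \<bullet> (M *v a)) + t\<^sup>2 * (b \<bullet> (M *v b))"
  using symmetric_inner_matrix_commute[OF assms, of a b]
  by (simp add: matrix_vector_right_distrib matrix_vector_mult_scaleR inner_add_left
      inner_add_right power2_eq_square algebra_simps)

lemma quadratic_nonneg_imp_linear_coeff_zero:
  fixes a b :: real
  assumes "\<And>t. 0 \<le> 2 * t * a + t\<^sup>2 * b"
  shows "a = 0"
proof (rule ccontr)
  assume "a \<noteq> 0"
  have b: "b \<ge> 0" using assms[of 1] assms[of "-1"] by simp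
  define t where "t = - a / (b + 1)"
  have a: "a = - t * (b + 1)" using b by (simp add: t_def)
  have "t \<noteq> 0" using \<open>a \<noteq> 0\<close> a by auto
  have "0 \<le> 2 * t * a + t\<^sup>2 * b" by (rule assms)
  also have "\<dots> = - (t\<^sup>2 * (b + 2))" by (simp add: a power2_eq_square algebra_simps)
  also have "\<dots> < 0" using b \<open>t \<noteq> 0\<close> by simp
  finally show False by simp
qed

lemma psd_quadratic_form_zero_imp_kernel:
  fixes P :: "real^'n^'n"
  assumes sym: "transpose P = P" and psd: "psd_mat P" and zero: "x \<bullet> (P *v x) = 0"
  shows "P *v x = 0"
proof -
  have "y \<bullet> (P *v x) = 0" for y
  proof (rule quadratic_nonneg_imp_linear_coeff_zero[where b = "y \<bullet> (P *v y)"])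
    fix t :: real
    have "0 \<le> (x + t *\<^sub>R y) \<bullet> (P *v (x + t *\<^sub>R y))" using psd by (simp add: psd_mat_def)
    then show "0 \<le> 2 * t * (y \<bullet> (P *v x)) + t\<^sup>2 * (y \<bullet> (P *v y))"
      using symmetric_quadratic_form_add_scaleR[OF sym, of x t y] zero by simp
  qed
  from this[of "P *v x"] show ?thesis by simp
qed

lemma symmetric_quadratic_form_zero_imp_zero:
  fixes D :: "real^'n^'n"
  assumes sym: "transpose D = D" and zero: "\<And>x. x \<bullet> (D *v x) = 0"
  shows "D = 0"
proof -
  have "y \<bullet> (D *v x) = 0" for x y
    using symmetric_quadratic_form_add_scaleR[OF sym, of x 1 y] zero[of x] zero[of y] zero[of "x + y"]
    by simp
  then have "D *v x = 0" for x using inner_eq_zero_iff by blast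
  then show ?thesis by (simp add: matrix_eq)
qed

lemma psd_mat_add: "psd_mat A \<Longrightarrow> psd_mat B \<Longrightarrow> psd_mat (A + B)"
  by (simp add: psd_mat_def matrix_vector_mult_add_rdistrib inner_add_right)

lemma psd_mat_scaleR: "psd_mat A \<Longrightarrow> 0 \<le> c \<Longrightarrow> psd_mat (c *\<^sub>R A)"
  by (simp add: psd_mat_def scaleR_matrix_vector_assoc[symmetric])

lemma pd_imp_psd_mat: "pd_mat A \<Longrightarrow> psd_mat A"
  unfolding pd_mat_def psd_mat_def by (metis less_le matrix_vector_mult_0_right inner_zero_left order_refl)

lemma transpose_add: "transpose (A + B) = transpose A + transpose (B :: real^'n^'n)"
  by (simp add: transpose_def vec_eq_iff)

definition outer_product :: "real^'n \<Rightarrow> real^'n^'n" where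
  "outer_product u = (\<chi> i j. u $ i * u $ j)"

lemma outer_product_mult: "outer_product u *v v = (u \<bullet> v) *\<^sub>R u"
  by (simp add: outer_product_def matrix_vector_mult_def inner_vec_def vec_eq_iff
      sum_distrib_left algebra_simps)

lemma transpose_outer_product: "transpose (outer_product u) = outer_product u"
  by (simp add: outer_product_def transpose_def vec_eq_iff)

lemma psd_outer_product: "psd_mat (outer_product u)"
  by (simp add: psd_mat_def outer_product_mult inner_commute)

lemma square_add_outer_product_kernel:
  fixes S :: "real^'n^'n"
  assumes sym: "transpose S = S" and ker: "S *v u = 0" and unit: "u \<bullet> u = 1"
  shows "(S + c *\<^sub>R outer_product u) *v ((S + c *\<^sub>R outer_product u) *v v)
           = S *v (S *v v) + (c\<^sup>2 * (u \<bullet> v)) *\<^sub>R u"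
proof -
  have T: "(S + c *\<^sub>R outer_product u) *v w = S *v w + (c * (u \<bullet> w)) *\<^sub>R u" for w
    by (simp add: matrix_vector_mult_add_rdistrib scaleR_matrix_vector_assoc[symmetric]
        outer_product_mult)
  have perp: "u \<bullet> (S *v w) = 0" for w
    using symmetric_inner_matrix_commute[OF sym, of u w] ker by simp
  show ?thesis
    unfolding T by (simp add: matrix_vector_right_distrib matrix_vector_mult_scaleR ker perp
        inner_add_right unit power2_eq_square)
qed

lemma rayleigh_max_exists:
  fixes M :: "real^'n^'n"
  assumes V: "subspace V" and nontrivial: "V \<noteq> {0}"
  obtains u where "u \<in> V" "norm u = 1" "\<And>w. w \<in> V \<Longrightarrow> w \<bullet> (M *v w) \<le> (u \<bullet> (M *v u)) * (w \<bullet> w)"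
proof -
  let ?q = "\<lambda>w. w \<bullet> (M *v w)"
  let ?T = "V \<inter> sphere 0 1"
  obtain v where v: "v \<in> V" "v \<noteq> 0" using nontrivial subspace_0[OF V] by blast
  then have "(1 / norm v) *\<^sub>R v \<in> ?T" using V by (simp add: subspace_scale)
  then have "?T \<noteq> {}" by blast
  moreover have "compact ?T"
    by (intro closed_Int_compact closed_subspace V compact_sphere)
  moreover have "continuous_on ?T ?q"
    by (intro continuous_intros linear_continuous_on matrix_vector_mul_linear)
  ultimately obtain u where u: "u \<in> ?T" and max: "\<And>w. w \<in> ?T \<Longrightarrow> ?q w \<le> ?q u"
    using continuous_attains_sup[of ?T ?q] by blast
  have "?q w \<le> ?q u * (w \<bullet> w)" if w: "w \<in> V" for w
  proof (cases "w = 0")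
    case False
    have "(1 / norm w) *\<^sub>R w \<in> ?T" using w V False by (simp add: subspace_scale)
    then have le: "?q ((1 / norm w) *\<^sub>R w) \<le> ?q u" by (rule max)
    have "?q w = (norm w)\<^sup>2 * ?q ((1 / norm w) *\<^sub>R w)"
      using False by (simp add: matrix_vector_mult_scaleR power2_eq_square)
    also have "\<dots> \<le> (norm w)\<^sup>2 * ?q u" by (rule mult_left_mono[OF le]) simp
    finally show ?thesis by (simp add: power2_norm_eq_inner mult.commute)
  qed simp
  with u that show ?thesis by auto
qed

lemma inner_add_scaleR_unit:
  fixes u w :: "'a::real_inner"
  assumes "u \<bullet> u = 1"
  shows "(u + t *\<^sub>R w) \<bullet> (u + t *\<^sub>R w) = 1 + 2 * t * (w \<bullet> u) + t\<^sup>2 * (w \<bullet> w)"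
  using assms by (simp add: inner_add_left inner_add_right inner_commute power2_eq_square algebra_simps)

text \<open>First-order condition: the Rayleigh quotient of \<open>u + t w\<close> is at most that of \<open>u\<close>,
  so the linear coefficient \<open>w \<bullet> (m u - M u)\<close> vanishes for every \<open>w \<in> V\<close>, in particular
  for \<open>w = m u - M u\<close> itself.\<close>
lemma rayleigh_max_imp_eigenvector:
  fixes M :: "real^'n^'n"
  assumes sym: "transpose M = M" and V: "subspace V" and inv: "\<And>v. v \<in> V \<Longrightarrow> M *v v \<in> V"
    and u: "u \<in> V" "u \<bullet> u = 1"
    and max: "\<And>w. w \<in> V \<Longrightarrow> w \<bullet> (M *v w) \<le> (u \<bullet> (M *v u)) * (w \<bullet> w)"
  shows "M *v u = (u \<bullet> (M *v u)) *\<^sub>R u"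
proof -
  define m where "m = u \<bullet> (M *v u)"
  define z where "z = m *\<^sub>R u - M *v u"
  have orth: "w \<bullet> z = 0" if w: "w \<in> V" for w
  proof (rule quadratic_nonneg_imp_linear_coeff_zero[where b = "m * (w \<bullet> w) - w \<bullet> (M *v w)"])
    fix t :: real
    have uw: "u + t *\<^sub>R w \<in> V" using u w V by (simp add: subspace_add subspace_scale)
    have "0 \<le> m * ((u + t *\<^sub>R w) \<bullet> (u + t *\<^sub>R w)) - (u + t *\<^sub>R w) \<bullet> (M *v (u + t *\<^sub>R w))"
      using max[OF uw] unfolding m_def by linarith
    also have "\<dots> = m * (1 + 2 * t * (w \<bullet> u) + t\<^sup>2 * (w \<bullet> w))
                     - (m + 2 * t * (w \<bullet> (M *v u)) + t\<^sup>2 * (w \<bullet> (M *v w)))"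
      unfolding symmetric_quadratic_form_add_scaleR[OF sym] m_def inner_add_scaleR_unit[OF u(2)] ..
    also have "\<dots> = 2 * t * (w \<bullet> z) + t\<^sup>2 * (m * (w \<bullet> w) - w \<bullet> (M *v w))"
      by (simp add: z_def algebra_simps)
    finally show "0 \<le> 2 * t * (w \<bullet> z) + t\<^sup>2 * (m * (w \<bullet> w) - w \<bullet> (M *v w))" .
  qed
  have "z \<in> V" using u inv V by (simp add: z_def subspace_diff subspace_scale)
  then have "z \<bullet> z = 0" by (rule orth)
  then have "z = 0" by simp
  then show ?thesis by (simp add: z_def m_def)
qed

lemma symmetric_invariant_subspace_has_eigenvector:
  fixes M :: "real^'n^'n"
  assumes sym: "transpose M = M" and V: "subspace V" and inv: "\<And>v. v \<in> V \<Longrightarrow> M *v v \<in> V"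
    and nontrivial: "V \<noteq> {0}"
  obtains u where "u \<in> V" "norm u = 1" "M *v u = (u \<bullet> (M *v u)) *\<^sub>R u"
    "\<And>w. w \<in> V \<Longrightarrow> w \<bullet> (M *v w) \<le> (u \<bullet> (M *v u)) * (w \<bullet> w)"
proof -
  obtain u where u: "u \<in> V" "norm u = 1"
    and max: "\<And>w. w \<in> V \<Longrightarrow> w \<bullet> (M *v w) \<le> (u \<bullet> (M *v u)) * (w \<bullet> w)"
    using rayleigh_max_exists[OF V nontrivial] by blast
  have "u \<bullet> u = 1" using u(2) by (simp add: dot_square_norm)
  then have "M *v u = (u \<bullet> (M *v u)) *\<^sub>R u"
    using rayleigh_max_imp_eigenvector[OF sym V inv u(1) _ max] by blast
  from that[OF u this max] show ?thesis .
qed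

section \<open>Square roots of positive semidefinite matrices\<close>

lemma psd_root_extend_by_eigenvector:
  fixes M R :: "real^'n^'n"
  assumes V: "subspace V" and u: "u \<in> V" "u \<bullet> u = 1"
    and Mu: "M *v u = lam *\<^sub>R u" and lam: "0 \<le> lam"
    and Rsym: "transpose R = R" and Rpsd: "psd_mat R"
    and Rperp: "\<And>v. (\<forall>w\<in>V. w \<bullet> u = 0 \<longrightarrow> w \<bullet> v = 0) \<Longrightarrow> R *v v = 0"
    and Rroot: "\<And>v. v \<in> V \<Longrightarrow> v \<bullet> u = 0 \<Longrightarrow> R *v (R *v v) = M *v v"
  defines "S \<equiv> R + sqrt lam *\<^sub>R outer_product u"
  shows "transpose S = S" and "psd_mat S"
    and "\<And>v. (\<forall>w\<in>V. w \<bullet> v = 0) \<Longrightarrow> S *v v = 0"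
    and "\<And>v. v \<in> V \<Longrightarrow> S *v (S *v v) = M *v v"
proof -
  have Ru: "R *v u = 0" by (rule Rperp) simp
  show "transpose S = S"
    by (simp add: S_def transpose_add transpose_scalar transpose_outer_product Rsym)
  show "psd_mat S"
    unfolding S_def using Rpsd psd_outer_product lam by (intro psd_mat_add psd_mat_scaleR) auto
  show "S *v v = 0" if "\<forall>w\<in>V. w \<bullet> v = 0" for v
    using that u(1) Rperp[of v]
    by (simp add: S_def matrix_vector_mult_add_rdistrib scaleR_matrix_vector_assoc[symmetric]
        outer_product_mult)
  show "S *v (S *v v) = M *v v" if v: "v \<in> V" for v
  proof -
    define w where "w = v - (u \<bullet> v) *\<^sub>R u"
    have vw: "v = w + (u \<bullet> v) *\<^sub>R u" by (simp add: w_def)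
    have w: "w \<in> V" "w \<bullet> u = 0" using v u V
      by (simp_all add: w_def subspace_diff subspace_scale inner_diff_left inner_diff_right inner_commute)
    have "R *v v = R *v w"
      by (subst vw) (simp add: matrix_vector_right_distrib matrix_vector_mult_scaleR Ru)
    then have "S *v (S *v v) = M *v w + (lam * (u \<bullet> v)) *\<^sub>R u"
      using square_add_outer_product_kernel[OF Rsym Ru u(2), of "sqrt lam" v] lam
      by (simp add: S_def Rroot[OF w])
    also have "\<dots> = M *v v"
      by (subst (2) vw) (simp add: matrix_vector_right_distrib matrix_vector_mult_scaleR Mu)
    finally show ?thesis .
  qed
qed

text \<open>The root on an \<open>M\<close>-invariant subspace \<open>V\<close> is built by splitting off one unit eigenvector
  at a time; vanishing on \<open>V\<^sup>\<bottom>\<close> keeps the pieces from interfering.\<close>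
lemma psd_root_on_invariant_subspace:
  fixes M :: "real^'n^'n"
  assumes sym: "transpose M = M" and psd: "psd_mat M"
  shows "subspace V \<Longrightarrow> (\<forall>v\<in>V. M *v v \<in> V) \<Longrightarrow>
    \<exists>S. transpose S = S \<and> psd_mat S \<and> (\<forall>v. (\<forall>w\<in>V. w \<bullet> v = 0) \<longrightarrow> S *v v = 0)
        \<and> (\<forall>v\<in>V. S *v (S *v v) = M *v v)"
proof (induction "dim V" arbitrary: V rule: less_induct)
  case less
  note V = less.prems(1) and inv = less.prems(2)
  show ?case
  proof (cases "V = {0}")
    case True
    show ?thesis
      by (rule exI[of _ 0]) (auto simp: True psd_mat_def transpose_def vec_eq_iff)
  next
    case False
    obtain u where u: "u \<in> V" "norm u = 1" and eig: "M *v u = (u \<bullet> (M *v u)) *\<^sub>R u"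
      using symmetric_invariant_subspace_has_eigenvector[OF sym V _ False] inv by blast
    have uu: "u \<bullet> u = 1" using u(2) by (simp add: dot_square_norm)
    have lam: "0 \<le> u \<bullet> (M *v u)" using psd by (simp add: psd_mat_def)
    define W where "W = {w\<in>V. w \<bullet> u = 0}"
    have W: "subspace W"
      using V unfolding W_def subspace_def by (auto simp: inner_add_left)
    have invW: "\<forall>w\<in>W. M *v w \<in> W"
    proof
      fix w assume w: "w \<in> W"
      have "(M *v w) \<bullet> u = w \<bullet> (M *v u)"
        using symmetric_inner_matrix_commute[OF sym, of u w] by (simp add: inner_commute)
      also have "\<dots> = 0" using w by (subst eig) (simp add: W_def)
      finally show "M *v w \<in> W" using w inv by (simp add: W_def)
    qed
    have "W \<subseteq> V" "u \<notin> W" using uu by (auto simp: W_def)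
    with u(1) have "W \<subset> V" by blast
    then have "dim W < dim V" using W V by (metis dim_psubset span_eq_iff)
    from less.hyps[OF this W invW] obtain R where
      "transpose R = R" "psd_mat R" "\<And>v. (\<forall>w\<in>W. w \<bullet> v = 0) \<Longrightarrow> R *v v = 0"
      "\<And>v. v \<in> W \<Longrightarrow> R *v (R *v v) = M *v v" by blast
    then show ?thesis
      using psd_root_extend_by_eigenvector[OF V u(1) uu eig lam, of R] by (auto simp: W_def)
  qed
qed

lemma psd_root_exists:
  fixes M :: "real^'n^'n"
  assumes "transpose M = M" and "psd_mat M"
  shows "\<exists>S. transpose S = S \<and> psd_mat S \<and> S ** S = M"
proof -
  obtain S where "transpose S = S" "psd_mat S" "\<forall>v. S *v (S *v v) = M *v v"
    using psd_root_on_invariant_subspace[OF assms, of UNIV] by auto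
  then show ?thesis by (metis matrix_eq matrix_vector_mul_assoc)
qed

lemma symmetric_nonzero_has_nonzero_eigenvalue:
  fixes D :: "real^'n^'n"
  assumes sym: "transpose D = D" and nonzero: "D \<noteq> 0"
  obtains u l where "u \<noteq> 0" "l \<noteq> 0" "D *v u = l *\<^sub>R u"
proof -
  have neg: "(- D) *v w = - (D *v w)" for w
    by (simp add: matrix_vector_mult_def vec_eq_iff sum_negf)
  have neg_sym: "transpose (- D) = - D" using sym by (simp add: transpose_def vec_eq_iff)
  obtain u where u: "norm u = 1" "D *v u = (u \<bullet> (D *v u)) *\<^sub>R u"
    and max: "\<And>w. w \<bullet> (D *v w) \<le> (u \<bullet> (D *v u)) * (w \<bullet> w)"
    using symmetric_invariant_subspace_has_eigenvector[OF sym subspace_UNIV] by auto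
  obtain u' where u': "norm u' = 1" "(- D) *v u' = (u' \<bullet> (- D *v u')) *\<^sub>R u'"
    and min: "\<And>w. w \<bullet> (- D *v w) \<le> (u' \<bullet> (- D *v u')) * (w \<bullet> w)"
    using symmetric_invariant_subspace_has_eigenvector[OF neg_sym subspace_UNIV] by auto
  show ?thesis
  proof (cases "u \<bullet> (D *v u) = 0")
    case False
    with u show ?thesis by (intro that[of u "u \<bullet> (D *v u)"]) auto
  next
    case max_zero: True
    show ?thesis
    proof (cases "u' \<bullet> (- D *v u') = 0")
      case False
      with u' show ?thesis by (intro that[of u' "- (u' \<bullet> (- D *v u'))"]) (auto simp: neg)
    next
      case True
      have "w \<bullet> (D *v w) = 0" for w
        using max[of w] min[of w] max_zero True by (simp add: neg)
      then have "D = 0" by (rule symmetric_quadratic_form_zero_imp_zero[OF sym])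
      with nonzero show ?thesis by simp
    qed
  qed
qed

text \<open>If \<open>S\<^sup>2 = T\<^sup>2\<close> and \<open>(S - T) u = l u\<close> with \<open>l \<noteq> 0\<close>, then \<open>S (S - T) u + (S - T) T u = 0\<close>
  gives \<open>l (u\<^sup>T S u + u\<^sup>T T u) = 0\<close>; both forms are nonnegative, so \<open>S u = T u = 0\<close>,
  contradicting \<open>l u \<noteq> 0\<close>.\<close>
lemma psd_root_unique:
  fixes S T :: "real^'n^'n"
  assumes Ssym: "transpose S = S" and Spsd: "psd_mat S"
    and Tsym: "transpose T = T" and Tpsd: "psd_mat T"
    and eq: "S ** S = T ** T"
  shows "S = T"
proof (rule ccontr)
  define D where "D = S - T"
  assume "S \<noteq> T"
  then have "D \<noteq> 0" by (simp add: D_def)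
  moreover have Dsym: "transpose D = D" using Ssym Tsym by (simp add: D_def transpose_def vec_eq_iff)
  ultimately obtain u l where u: "u \<noteq> 0" "l \<noteq> 0" and Du: "D *v u = l *\<^sub>R u"
    using symmetric_nonzero_has_nonzero_eigenvalue by blast
  have Dv: "D *v v = S *v v - T *v v" for v by (simp add: D_def matrix_vector_mult_diff_rdistrib)
  have "S *v (S *v u) = T *v (T *v u)" using eq by (simp add: matrix_vector_mul_assoc)
  then have "S *v (D *v u) + D *v (T *v u) = 0"
    by (simp add: Dv matrix_vector_mult_diff_distrib)
  then have "u \<bullet> (S *v (D *v u)) + (T *v u) \<bullet> (D *v u) = 0"
    using symmetric_inner_matrix_commute[OF Dsym, of u "T *v u"]
    by (metis inner_add_right inner_zero_right)
  then have "l * (u \<bullet> (S *v u) + u \<bullet> (T *v u)) = 0"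
    by (simp add: Du matrix_vector_mult_scaleR inner_commute algebra_simps)
  then have "u \<bullet> (S *v u) + u \<bullet> (T *v u) = 0" using u by simp
  moreover have "0 \<le> u \<bullet> (S *v u)" "0 \<le> u \<bullet> (T *v u)" using Spsd Tpsd by (auto simp: psd_mat_def)
  ultimately have "S *v u = 0" "T *v u = 0"
    using psd_quadratic_form_zero_imp_kernel Ssym Spsd Tsym Tpsd
    by (metis add_nonneg_eq_0_iff)+
  then have "l *\<^sub>R u = 0" using Du Dv by simp
  with u show False by simp
qed

lemma psd_sqrt:
  fixes M :: "real^'n^'n"
  assumes "transpose M = M" and "psd_mat M"
  shows "transpose (psd_sqrt M) = psd_sqrt M" and "psd_mat (psd_sqrt M)"
    and "psd_sqrt M ** psd_sqrt M = M"
proof -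
  have "\<exists>!S. transpose S = S \<and> psd_mat S \<and> S ** S = M"
    using psd_root_exists[OF assms] psd_root_unique by metis
  then have "transpose (psd_sqrt M) = psd_sqrt M \<and> psd_mat (psd_sqrt M) \<and> psd_sqrt M ** psd_sqrt M = M"
    unfolding psd_sqrt_def by (rule theI')
  then show "transpose (psd_sqrt M) = psd_sqrt M" and "psd_mat (psd_sqrt M)"
    and "psd_sqrt M ** psd_sqrt M = M" by simp_all
qed

section \<open>Kernel ridge regression and the lasso\<close>

lemma power2_norm_vec: "(norm (v :: real^'n))\<^sup>2 = (\<Sum>i\<in>UNIV. (v $ i)\<^sup>2)"
  unfolding power2_norm_eq_inner by (simp add: inner_vec_def power2_eq_square)

lemma power2_norm_vec_Plus:
  fixes v :: "real^('a::finite + 'b::finite)"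
  shows "(norm v)\<^sup>2 = (\<Sum>j\<in>UNIV. (v $ Inl j)\<^sup>2) + (\<Sum>j\<in>UNIV. (v $ Inr j)\<^sup>2)"
proof -
  have "(norm v)\<^sup>2 = (\<Sum>s\<in>UNIV. (v $ s)\<^sup>2)" by (rule power2_norm_vec)
  also have "\<dots> = (\<Sum>s\<in>UNIV <+> UNIV. (v $ s)\<^sup>2)" by simp
  finally show ?thesis by (subst (asm) sum.Plus) auto
qed

text \<open>The lasso objective is the kernel-ridge value at \<open>\<beta> = (K + \<mu> I)\<^sup>-\<^sup>1 (y - o)\<close>: the top block
  of \<open>X\<^sub>\<mu> (y - o)\<close> is \<open>y - o - K \<beta>\<close>, and the bottom block \<open>(\<mu> K)\<^sup>1\<^sup>/\<^sup>2 \<beta>\<close> has squared norm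
  \<open>\<mu> \<beta>\<^sup>T K \<beta>\<close>. No invertibility is needed.\<close>
lemma lasso_obj_eq_ridge_value:
  fixes Km :: "real^'n::finite^'n" and y ov :: "real^'n"
  assumes sym: "transpose Km = Km" and psd: "psd_mat Km" and mu: "0 \<le> \<mu>"
  defines "\<beta> \<equiv> matrix_inv (Km + \<mu> *\<^sub>R mat 1) *v (y - ov)"
  shows "lasso_obj \<mu> lam1 Km y ov
           = (norm (y - ov - Km *v \<beta>))\<^sup>2 + \<mu> * (\<beta> \<bullet> (Km *v \<beta>)) + lam1 * l1norm ov"
proof -
  define R where "R = matrix_inv (Km + \<mu> *\<^sub>R mat 1)"
  define S where "S = psd_sqrt (\<mu> *\<^sub>R Km)"
  have X: "X_mu \<mu> Km = (\<chi> s. case s of Inl j \<Rightarrow> (mat 1 - Km ** R) $ j | Inr j \<Rightarrow> (S ** R) $ j)"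
    by (simp only: X_mu_def Let_def R_def S_def)
  have "X_mu \<mu> Km *v y - X_mu \<mu> Km *v ov = X_mu \<mu> Km *v (y - ov)"
    by (simp add: matrix_vector_mult_diff_distrib)
  moreover have "(X_mu \<mu> Km *v (y - ov)) $ Inl j = ((mat 1 - Km ** R) *v (y - ov)) $ j" for j
    by (simp add: X matrix_vector_mult_def)
  moreover have "(mat 1 - Km ** R) *v (y - ov) = y - ov - Km *v \<beta>"
    by (simp add: \<beta>_def R_def matrix_vector_mult_diff_rdistrib matrix_vector_mul_assoc)
  moreover have "(X_mu \<mu> Km *v (y - ov)) $ Inr j = ((S ** R) *v (y - ov)) $ j" for j
    by (simp add: X matrix_vector_mult_def)
  moreover have "(S ** R) *v (y - ov) = S *v \<beta>"
    by (simp add: \<beta>_def R_def matrix_vector_mul_assoc)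
  moreover have "(\<Sum>j\<in>UNIV. ((S *v \<beta>) $ j)\<^sup>2) = \<mu> * (\<beta> \<bullet> (Km *v \<beta>))"
  proof -
    have "transpose (\<mu> *\<^sub>R Km) = \<mu> *\<^sub>R Km" "psd_mat (\<mu> *\<^sub>R Km)"
      using sym psd mu by (simp_all add: transpose_scalar psd_mat_scaleR)
    note root = psd_sqrt[OF this, folded S_def]
    have "(\<Sum>j\<in>UNIV. ((S *v \<beta>) $ j)\<^sup>2) = (S *v \<beta>) \<bullet> (S *v \<beta>)"
      by (simp add: inner_vec_def power2_eq_square)
    also have "\<dots> = \<beta> \<bullet> ((S ** S) *v \<beta>)"
      using symmetric_inner_matrix_commute[OF root(1), of "S *v \<beta>" \<beta>]
      by (simp add: matrix_vector_mul_assoc)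
    finally show ?thesis
      by (simp add: root(3) scaleR_matrix_vector_assoc[symmetric])
  qed
  ultimately show ?thesis
    unfolding lasso_obj_def power2_norm_vec_Plus power2_norm_vec[of "y - ov - Km *v \<beta>"] by simp
qed

text \<open>Representer argument for kernel ridge regression: writing \<open>f = g + h\<close>, the cross terms of
  the data fit and of the penalty are \<open>-2 \<mu> \<Sum>\<^sub>i \<beta>\<^sub>i \<langle>h, \<phi>\<^sub>i\<rangle>\<close> and \<open>+2 \<mu> \<Sum>\<^sub>i \<beta>\<^sub>i \<langle>h, \<phi>\<^sub>i\<rangle>\<close>,
  because the residual of \<open>g\<close> is \<open>\<mu> \<beta>\<close> by the normal equation.\<close>
lemma ridge_objective_split:
  fixes \<phi> :: "'n::finite \<Rightarrow> 'h::real_inner" and Km :: "real^'n^'n" and \<beta> r :: "real^'n"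
  assumes gram: "\<And>i j. Km $ i $ j = \<phi> j \<bullet> \<phi> i"
    and normal: "r - Km *v \<beta> = \<mu> *\<^sub>R \<beta>"
  defines "g \<equiv> \<Sum>j\<in>UNIV. \<beta> $ j *\<^sub>R \<phi> j"
  shows "(\<Sum>i\<in>UNIV. (r $ i - f \<bullet> \<phi> i)\<^sup>2) + \<mu> * (norm f)\<^sup>2
           = (norm (r - Km *v \<beta>))\<^sup>2 + \<mu> * (\<beta> \<bullet> (Km *v \<beta>))
             + ((\<Sum>i\<in>UNIV. ((f - g) \<bullet> \<phi> i)\<^sup>2) + \<mu> * (norm (f - g))\<^sup>2)"
proof -
  define h where "h = f - g"
  define c where "c i = h \<bullet> \<phi> i" for i
  have res: "r $ i - (Km *v \<beta>) $ i = \<mu> * \<beta> $ i" for i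
    using arg_cong[OF normal, of "\<lambda>v. v $ i"] by simp
  have g_\<phi>: "g \<bullet> \<phi> i = (Km *v \<beta>) $ i" for i
    by (simp add: g_def inner_sum_left gram matrix_vector_mult_def mult.commute)
  have g_w: "g \<bullet> w = (\<Sum>j\<in>UNIV. \<beta> $ j * (w \<bullet> \<phi> j))" for w
    unfolding g_def by (simp add: inner_sum_left inner_sum_right inner_commute)
  have g_h: "g \<bullet> h = (\<Sum>j\<in>UNIV. \<beta> $ j * c j)"
    by (simp add: g_w c_def)
  have g_g: "g \<bullet> g = \<beta> \<bullet> (Km *v \<beta>)"
    by (simp only: g_w[of g] g_\<phi> inner_vec_def) simp
  have f: "f = g + h" by (simp add: h_def)
  have "(\<Sum>i\<in>UNIV. (r $ i - f \<bullet> \<phi> i)\<^sup>2) = (\<Sum>i\<in>UNIV. (\<mu> * \<beta> $ i - c i)\<^sup>2)"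
    using res by (simp add: f inner_add_left g_\<phi> c_def algebra_simps)
  also have "\<dots> = (\<Sum>i\<in>UNIV. (\<mu> * \<beta> $ i)\<^sup>2) - 2 * \<mu> * (\<Sum>i\<in>UNIV. \<beta> $ i * c i)
                    + (\<Sum>i\<in>UNIV. (c i)\<^sup>2)"
    by (simp add: power2_diff sum.distrib sum_subtractf sum_distrib_left algebra_simps)
  also have "(\<Sum>i\<in>UNIV. (\<mu> * \<beta> $ i)\<^sup>2) = (norm (r - Km *v \<beta>))\<^sup>2"
    unfolding normal power2_norm_vec by simp
  finally have fit: "(\<Sum>i\<in>UNIV. (r $ i - f \<bullet> \<phi> i)\<^sup>2)
      = (norm (r - Km *v \<beta>))\<^sup>2 - 2 * \<mu> * (\<Sum>i\<in>UNIV. \<beta> $ i * c i) + (\<Sum>i\<in>UNIV. (c i)\<^sup>2)" .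
  have penalty: "(norm f)\<^sup>2 = \<beta> \<bullet> (Km *v \<beta>) + 2 * (\<Sum>j\<in>UNIV. \<beta> $ j * c j) + (norm h)\<^sup>2"
    by (simp add: power2_norm_eq_inner f inner_add_left inner_add_right g_g g_h
        inner_commute[of h g])
  show ?thesis
    unfolding fit penalty h_def[symmetric] c_def[symmetric] by (simp add: algebra_simps)
qed

lemma invertible_pd_add_scaleR_mat:
  fixes Km :: "real^'n^'n"
  assumes pd: "pd_mat Km" and mu: "0 \<le> \<mu>"
  shows "invertible (Km + \<mu> *\<^sub>R mat 1)"
proof -
  have "v = 0" if "(Km + \<mu> *\<^sub>R mat 1) *v v = 0" for v
  proof (rule ccontr)
    assume "v \<noteq> 0"
    then have "0 < v \<bullet> (Km *v v) + \<mu> * (v \<bullet> v)"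
      using pd mu by (simp add: pd_mat_def add_pos_nonneg)
    also have "\<dots> = v \<bullet> ((Km + \<mu> *\<^sub>R mat 1) *v v)"
      by (simp add: matrix_vector_mult_add_rdistrib scaleR_matrix_vector_assoc[symmetric]
          inner_add_right)
    finally show False using that by simp
  qed
  then show ?thesis
    using matrix_left_invertible_ker invertible_left_inverse by blast
qed

lemma matrix_mul_matrix_inv:
  fixes A :: "'a::field^'n^'n"
  assumes "invertible A"
  shows "A ** matrix_inv A = mat 1"
  using assms unfolding matrix_inv_def invertible_def by (rule someI2_ex) auto

lemma is_rkhs_kernel_eq_inner:
  assumes "is_rkhs k K"
  shows "K z w = k w \<bullet> k z"
  using assms by (simp add: is_rkhs_def rkhs_eval_def)

lemma is_rkhs_eval_kernel_expansion:
  assumes "is_rkhs k K"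
  shows "rkhs_eval k (\<Sum>j\<in>UNIV. c j *\<^sub>R k (x j)) z = (\<Sum>j\<in>UNIV. c j * K z (x j))"
  by (simp add: rkhs_eval_def inner_sum_left is_rkhs_kernel_eq_inner[OF assms])

lemma transpose_kmat_rkhs:
  assumes "is_rkhs k K"
  shows "transpose (kmat K x) = kmat K x"
  by (simp add: kmat_def transpose_def vec_eq_iff is_rkhs_kernel_eq_inner[OF assms] inner_commute)

lemma robust_obj_eq_lasso_obj_plus:
  fixes k :: "'a \<Rightarrow> 'h::{real_inner,complete_space}" and x :: "'n::finite \<Rightarrow> 'a"
    and y ov :: "real^'n"
  assumes rkhs: "is_rkhs k K" and psd: "psd_mat (kmat K x)" and mu: "0 \<le> \<mu>"
    and inv: "invertible (kmat K x + \<mu> *\<^sub>R mat 1)"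
  defines "g \<equiv> \<Sum>j\<in>UNIV. (matrix_inv (kmat K x + \<mu> *\<^sub>R mat 1) *v (y - ov)) $ j *\<^sub>R k (x j)"
  shows "robust_obj k x y \<mu> lam1 f ov = lasso_obj \<mu> lam1 (kmat K x) y ov
           + ((\<Sum>i\<in>UNIV. ((f - g) \<bullet> k (x i))\<^sup>2) + \<mu> * (norm (f - g))\<^sup>2)"
proof -
  define A where "A = kmat K x + \<mu> *\<^sub>R mat 1"
  define \<beta> where "\<beta> = matrix_inv A *v (y - ov)"
  have "A *v \<beta> = y - ov"
    using matrix_mul_matrix_inv[OF inv] by (simp add: \<beta>_def A_def matrix_vector_mul_assoc)
  then have normal: "y - ov - kmat K x *v \<beta> = \<mu> *\<^sub>R \<beta>"
    by (simp add: A_def matrix_vector_mult_add_rdistrib scaleR_matrix_vector_assoc[symmetric]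
        algebra_simps)
  have gram: "kmat K x $ i $ j = k (x j) \<bullet> k (x i)" for i j
    by (simp add: kmat_def is_rkhs_kernel_eq_inner[OF rkhs])
  have "robust_obj k x y \<mu> lam1 f ov
      = (\<Sum>i\<in>UNIV. ((y - ov) $ i - f \<bullet> k (x i))\<^sup>2) + \<mu> * (norm f)\<^sup>2 + lam1 * l1norm ov"
    by (simp add: robust_obj_def rkhs_eval_def algebra_simps)
  then show ?thesis
    unfolding ridge_objective_split[where \<phi> = "\<lambda>j. k (x j)", OF gram normal]
      lasso_obj_eq_ridge_value[OF transpose_kmat_rkhs[OF rkhs] psd mu]
    by (simp add: g_def \<beta>_def A_def)
qed

theorem proposition2:
  fixes k :: "real^'p \<Rightarrow> 'h::{real_inner,complete_space}"
    and K :: "real^'p \<Rightarrow> real^'p \<Rightarrow> real"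
    and x :: "'n::finite \<Rightarrow> real^'p"
    and y :: "real^'n"
    and \<mu> lam1 :: real
    and o_lasso :: "real^'n"
  assumes rkhs: "is_rkhs k K"
    and kpd: "pd_kernel K"
    and Kpd: "pd_mat (kmat K x)"
    and mu: "\<mu> \<ge> 0" and lam: "lam1 \<ge> 0"
    and lasso: "\<forall>ov. lasso_obj \<mu> lam1 (kmat K x) y o_lasso \<le> lasso_obj \<mu> lam1 (kmat K x) y ov"
  shows "let \<beta> = matrix_inv (kmat K x + \<mu> *\<^sub>R mat 1) *v (y - o_lasso)
         in (\<exists>fh. \<forall>z. rkhs_eval k fh z = (\<Sum>i\<in>UNIV. \<beta> $ i * K z (x i))) \<and>
            (\<forall>fh. (\<forall>z. rkhs_eval k fh z = (\<Sum>i\<in>UNIV. \<beta> $ i * K z (x i))) \<longrightarrow>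
               (\<forall>f ov. robust_obj k x y \<mu> lam1 fh o_lasso \<le> robust_obj k x y \<mu> lam1 f ov))"
proof -
  define \<beta> where "\<beta> = matrix_inv (kmat K x + \<mu> *\<^sub>R mat 1) *v (y - o_lasso)"
  define g where "g = (\<Sum>j\<in>UNIV. \<beta> $ j *\<^sub>R k (x j))"
  note split = robust_obj_eq_lasso_obj_plus[OF rkhs pd_imp_psd_mat[OF Kpd] mu
      invertible_pd_add_scaleR_mat[OF Kpd mu]]
  have g_eval: "rkhs_eval k g z = (\<Sum>i\<in>UNIV. \<beta> $ i * K z (x i))" for z
    unfolding g_def by (rule is_rkhs_eval_kernel_expansion[OF rkhs])
  show ?thesis
    unfolding Let_def \<beta>_def[symmetric]
  proof (intro conjI allI impI)
    show "\<exists>fh. \<forall>z. rkhs_eval k fh z = (\<Sum>i\<in>UNIV. \<beta> $ i * K z (x i))"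
      using g_eval by blast
  next
    fix fh f ov
    assume "\<forall>z. rkhs_eval k fh z = (\<Sum>i\<in>UNIV. \<beta> $ i * K z (x i))"
    then have "rkhs_eval k fh = rkhs_eval k g" using g_eval by auto
    then have "fh = g" using rkhs by (simp add: is_rkhs_def inj_eq)
    then have "robust_obj k x y \<mu> lam1 fh o_lasso = lasso_obj \<mu> lam1 (kmat K x) y o_lasso"
      using split[where ov = o_lasso and f = fh] by (simp add: g_def \<beta>_def)
    also have "\<dots> \<le> lasso_obj \<mu> lam1 (kmat K x) y ov" using lasso by blast
    also have "\<dots> \<le> robust_obj k x y \<mu> lam1 f ov"
      using split[where ov = ov and f = f] mu by (simp add: sum_nonneg)
    finally show "robust_obj k x y \<mu> lam1 fh o_lasso \<le> robust_obj k x y \<mu> lam1 f ov" .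
  qed
qed

end
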